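(* Let $R$ be a local ring (with maximal ideal $\mathcal{M}$) which is Noetherian (i.e., both left and right Noetherian). If every left $R$-module generated by two elements is a direct sum of cyclic modules, then one of the following holds: (a) $R$ is an Artinian principal left ideal ring; (b) $R$ is an Artinian principal right ideal ring; (c) $R$ is a prime ring and every two-sided ideal of $R$ is principal both as a left ideal and as a right ideal.
   Context: All rings have identity and all modules are unital. A ring $R$ is local if it has a unique maximal left ideal $\mathcal{M}$ (equivalently, $R/J(R)$ is a division ring, $\mathcal{M}=J(R)$). "Artinian" means both left and right Artinian; "Noetherian" means both left and right Noetherian. *)

theory Defs
  imports Main
begin

text \<open>Rings are modelled by the type class ring_1 (associative ring with identity,
  not necessarily commutative); the ring R is the whole type.\<close>

definition left_ideal :: "'a::ring_1 set \<Rightarrow> bool" where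
  "left_ideal I \<longleftrightarrow> 0 \<in> I \<and> (\<forall>x\<in>I. \<forall>y\<in>I. x + y \<in> I) \<and> (\<forall>x\<in>I. - x \<in> I)
      \<and> (\<forall>r x. x \<in> I \<longrightarrow> r * x \<in> I)"

definition right_ideal :: "'a::ring_1 set \<Rightarrow> bool" where
  "right_ideal I \<longleftrightarrow> 0 \<in> I \<and> (\<forall>x\<in>I. \<forall>y\<in>I. x + y \<in> I) \<and> (\<forall>x\<in>I. - x \<in> I)
      \<and> (\<forall>r x. x \<in> I \<longrightarrow> x * r \<in> I)"

definition two_sided_ideal :: "'a::ring_1 set \<Rightarrow> bool" where
  "two_sided_ideal I \<longleftrightarrow> left_ideal I \<and> right_ideal I"

definition maximal_left_ideal :: "'a::ring_1 set \<Rightarrow> bool" where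
  "maximal_left_ideal M \<longleftrightarrow> left_ideal M \<and> M \<noteq> UNIV \<and>
     (\<forall>J. left_ideal J \<and> M \<subseteq> J \<and> J \<noteq> UNIV \<longrightarrow> J = M)"

definition local_ring :: "'a::ring_1 itself \<Rightarrow> bool" where
  "local_ring _ \<longleftrightarrow> (\<exists>!M::'a set. maximal_left_ideal M)"

definition left_noetherian :: "'a::ring_1 itself \<Rightarrow> bool" where
  "left_noetherian _ \<longleftrightarrow> (\<forall>I::nat \<Rightarrow> 'a set. (\<forall>n. left_ideal (I n)) \<and> (\<forall>n. I n \<subseteq> I (Suc n))
      \<longrightarrow> (\<exists>N. \<forall>n\<ge>N. I n = I N))"

definition right_noetherian :: "'a::ring_1 itself \<Rightarrow> bool" where
  "right_noetherian _ \<longleftrightarrow> (\<forall>I::nat \<Rightarrow> 'a set. (\<forall>n. right_ideal (I n)) \<and> (\<forall>n. I n \<subseteq> I (Suc n))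
      \<longrightarrow> (\<exists>N. \<forall>n\<ge>N. I n = I N))"

definition left_artinian :: "'a::ring_1 itself \<Rightarrow> bool" where
  "left_artinian _ \<longleftrightarrow> (\<forall>I::nat \<Rightarrow> 'a set. (\<forall>n. left_ideal (I n)) \<and> (\<forall>n. I (Suc n) \<subseteq> I n)
      \<longrightarrow> (\<exists>N. \<forall>n\<ge>N. I n = I N))"

definition right_artinian :: "'a::ring_1 itself \<Rightarrow> bool" where
  "right_artinian _ \<longleftrightarrow> (\<forall>I::nat \<Rightarrow> 'a set. (\<forall>n. right_ideal (I n)) \<and> (\<forall>n. I (Suc n) \<subseteq> I n)
      \<longrightarrow> (\<exists>N. \<forall>n\<ge>N. I n = I N))"

definition noetherian :: "'a::ring_1 itself \<Rightarrow> bool" where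
  "noetherian T \<longleftrightarrow> left_noetherian T \<and> right_noetherian T"

definition artinian :: "'a::ring_1 itself \<Rightarrow> bool" where
  "artinian T \<longleftrightarrow> left_artinian T \<and> right_artinian T"

definition principal_left_ideal_ring :: "'a::ring_1 itself \<Rightarrow> bool" where
  "principal_left_ideal_ring _ \<longleftrightarrow> (\<forall>I::'a set. left_ideal I \<longrightarrow> (\<exists>a. I = {r * a | r. True}))"

definition principal_right_ideal_ring :: "'a::ring_1 itself \<Rightarrow> bool" where
  "principal_right_ideal_ring _ \<longleftrightarrow> (\<forall>I::'a set. right_ideal I \<longrightarrow> (\<exists>a. I = {a * r | r. True}))"

definition prime_ring :: "'a::ring_1 itself \<Rightarrow> bool" where
  "prime_ring _ \<longleftrightarrow> (0::'a) \<noteq> 1 \<and> (\<forall>a b::'a. (\<forall>r. a * r * b = 0) \<longrightarrow> a = 0 \<or> b = 0)"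

text \<open>Left modules generated by two elements are, up to isomorphism, exactly the quotients
  R^2/N of the free left module R^2 = R \<times> R by a left submodule N.\<close>

definition left_submodule2 :: "('a::ring_1 \<times> 'a) set \<Rightarrow> bool" where
  "left_submodule2 N \<longleftrightarrow> (0, 0) \<in> N
     \<and> (\<forall>u\<in>N. \<forall>v\<in>N. (fst u + fst v, snd u + snd v) \<in> N)
     \<and> (\<forall>u\<in>N. (- fst u, - snd u) \<in> N)
     \<and> (\<forall>r u. u \<in> N \<longrightarrow> (r * fst u, r * snd u) \<in> N)"

definition lin2 :: "('a::ring_1 \<times> 'a) set \<Rightarrow> ('a \<times> 'a \<Rightarrow> 'a) \<Rightarrow> 'a \<times> 'a" where
  "lin2 S c = ((\<Sum>s\<in>S. c s * fst s), (\<Sum>s\<in>S. c s * snd s))"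

text \<open>R^2/N is the (internal) direct sum of the cyclic submodules R \<bar>s\<bar>, s \<in> S:
  the classes of S generate, and a relation \<Sum> c_s \<bar>s\<bar> = 0 forces every c_s \<bar>s\<bar> = 0.\<close>
definition quot2_dsum_cyclic :: "('a::ring_1 \<times> 'a) set \<Rightarrow> bool" where
  "quot2_dsum_cyclic N \<longleftrightarrow> (\<exists>S. finite S
     \<and> (\<forall>v. \<exists>c. (fst v - fst (lin2 S c), snd v - snd (lin2 S c)) \<in> N)
     \<and> (\<forall>c. lin2 S c \<in> N \<longrightarrow> (\<forall>s\<in>S. (c s * fst s, c s * snd s) \<in> N)))"

end

theory Submission
  imports Defs "HOL-Library.Product_Plus" "HOL-Library.Set_Algebras"
begin

text \<open>
  Applied to the cyclic submodules \<open>R(x, y)\<close> of \<open>R\<^sup>2\<close>, the hypothesis on two-generated modules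
  forces \<open>x \<in> yR\<close> or \<open>y \<in> xR\<close>: the principal right ideals form a chain. By the ascending chain
  condition every right ideal is then principal; in particular \<open>M = \<pi>R\<close>, and \<open>R\<pi>\<^sup>k \<subseteq> \<pi>\<^sup>kR\<close>
  because \<open>M\<close> is two-sided.

  If \<open>\<pi>\<close> is nilpotent, every layer \<open>\<pi>\<^sup>kR/\<pi>\<^sup>k\<^sup>+\<^sup>1R\<close> is simple as a right module and, by the
  left ascending chain condition, of finite length as a left module, so \<open>R\<close> is Artinian and
  a principal right ideal ring. Otherwise the Krull intersection theorem \<open>\<Inter>\<^sub>k \<pi>\<^sup>kR = 0\<close>
  writes each nonzero element as \<open>\<pi>\<^sup>k\<close> times a unit, so \<open>R\<close> is a domain; the left Ore
  condition then gives \<open>\<pi>R = R\<pi>\<close>, and every nonzero two-sided ideal is \<open>\<pi>\<^sup>kR = R\<pi>\<^sup>k\<close>.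
\<close>

section \<open>Chain conditions\<close>

lemma ascending_chain_reaches:
  assumes acc: "\<forall>I::nat \<Rightarrow> 'b set. (\<forall>n. P (I n)) \<and> (\<forall>n. I n \<subseteq> I (Suc n)) \<longrightarrow> (\<exists>N. \<forall>n\<ge>N. I n = I N)"
    and start: "P A" "Q A"
    and ascend: "\<And>X. P X \<Longrightarrow> Q X \<Longrightarrow> \<not> G X \<Longrightarrow> \<exists>Y. P Y \<and> Q Y \<and> X \<subset> Y"
  shows "\<exists>X. P X \<and> Q X \<and> G X"
proof (rule ccontr)
  assume no_goal: "\<not> ?thesis"
  define I where "I = rec_nat A (\<lambda>n X. SOME Y. P Y \<and> Q Y \<and> X \<subset> Y)"
  have I0: "I 0 = A"
    by (simp add: I_def)
  have IS: "I (Suc n) = (SOME Y. P Y \<and> Q Y \<and> I n \<subset> Y)" for n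
    by (simp add: I_def)
  have step: "P (SOME Y. P Y \<and> Q Y \<and> X \<subset> Y) \<and> Q (SOME Y. P Y \<and> Q Y \<and> X \<subset> Y)
      \<and> X \<subset> (SOME Y. P Y \<and> Q Y \<and> X \<subset> Y)" if "P X" "Q X" for X
  proof -
    have "\<exists>Y. P Y \<and> Q Y \<and> X \<subset> Y"
      using that ascend no_goal by blast
    from someI_ex[OF this] show ?thesis
      by blast
  qed
  have PQ: "P (I n) \<and> Q (I n)" for n
  proof (induction n)
    case 0
    then show ?case
      using start I0 by simp
  next
    case (Suc n)
    then show ?case
      using step[of "I n"] IS[of n] by simp
  qed
  have strict: "I n \<subset> I (Suc n)" for n
    using step[of "I n"] IS[of n] PQ[of n] by simp
  have "\<forall>n. I n \<subseteq> I (Suc n)"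
    using strict by auto
  moreover have "\<forall>n. P (I n)"
    using PQ by auto
  ultimately have "\<exists>N. \<forall>n\<ge>N. I n = I N"
    using mp[OF spec[OF acc, of I]] by simp
  then obtain N where "\<forall>n\<ge>N. I n = I N" ..
  then have "I (Suc N) = I N"
    using le_SucI by blast
  then show False
    using strict[of N] by simp
qed

definition additive_subgroup :: "'a::group_add set \<Rightarrow> bool" where
  "additive_subgroup X \<longleftrightarrow> 0 \<in> X \<and> (\<forall>a\<in>X. \<forall>b\<in>X. a + b \<in> X) \<and> (\<forall>a\<in>X. - a \<in> X)"

definition dcc_on :: "('a set \<Rightarrow> bool) \<Rightarrow> 'a set \<Rightarrow> bool" where
  "dcc_on P B \<longleftrightarrow> (\<forall>W::nat \<Rightarrow> 'a set. (\<forall>j. P (W j) \<and> W j \<subseteq> B) \<and> (\<forall>j. W (Suc j) \<subseteq> W j)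
      \<longrightarrow> (\<exists>N. \<forall>n\<ge>N. W n = W N))"

lemma dcc_on_zero:
  assumes "\<And>X. P X \<Longrightarrow> 0 \<in> X"
  shows "dcc_on P {0}"
  unfolding dcc_on_def
proof (intro allI impI)
  fix W :: "nat \<Rightarrow> 'a set" assume "(\<forall>j. P (W j) \<and> W j \<subseteq> {0}) \<and> (\<forall>j. W (Suc j) \<subseteq> W j)"
  then have "W j = {0}" for j
    using assms by blast
  then show "\<exists>N. \<forall>n\<ge>N. W n = W N"
    by simp
qed

lemma additive_subgroup_eqI:
  fixes W W' A :: "'a::ab_group_add set"
  assumes W: "additive_subgroup W" and W': "additive_subgroup W'" and "0 \<in> A" and "W \<subseteq> W'"
    and Int_eq: "W \<inter> A = W' \<inter> A" and plus_eq: "W + A = W' + A"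
  shows "W = W'"
proof
  show "W' \<subseteq> W"
  proof
    fix x assume x: "x \<in> W'"
    then have "x + 0 \<in> W' + A"
      using \<open>0 \<in> A\<close> by blast
    then have "x \<in> W + A"
      unfolding plus_eq by simp
    then obtain w a where xwa: "x = w + a" and "w \<in> W" "a \<in> A"
      by (rule set_plus_elim)
    then have "a = x + - w" and "w \<in> W'"
      using \<open>W \<subseteq> W'\<close> by auto
    then have "a \<in> W"
      using x W' Int_eq \<open>a \<in> A\<close> unfolding additive_subgroup_def by blast
    then show "x \<in> W"
      using xwa \<open>w \<in> W\<close> W unfolding additive_subgroup_def by blast
  qed
qed fact

lemma antimono_two_valued_eventually_const:
  assumes "\<And>m n. m \<le> n \<Longrightarrow> U n \<subseteq> U m" "\<And>j. A \<subseteq> U j" "\<And>j. U j = A \<or> U j = B"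
  shows "\<exists>N. \<forall>n\<ge>N. U n = U N"
proof (cases "\<exists>j. U j = A")
  case True
  then obtain j where "U j = A"
    by blast
  then have "U n = U j" if "n \<ge> j" for n
    using assms(1)[OF that] assms(2)[of n] by blast
  then show ?thesis
    by blast
next
  case False
  then have "U n = B" for n
    using assms(3) by blast
  then show ?thesis
    by simp
qed

text \<open>The descending chain condition passes from \<open>A\<close> to \<open>B \<supseteq> A\<close> when no \<open>P\<close>-set lies strictly
  between them: a descending chain in \<open>B\<close> is controlled by its traces \<open>W j \<inter> A\<close> and \<open>W j + A\<close>.\<close>
lemma dcc_on_extend:
  fixes P :: "'a::ab_group_add set \<Rightarrow> bool"
  assumes Int: "\<And>X Y. P X \<Longrightarrow> P Y \<Longrightarrow> P (X \<inter> Y)"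
    and plus: "\<And>X Y. P X \<Longrightarrow> P Y \<Longrightarrow> P (X + Y)"
    and subgroup: "\<And>X. P X \<Longrightarrow> additive_subgroup X"
    and dcc_A: "dcc_on P A" and "P A" "P B" "A \<subseteq> B"
    and gap: "\<And>K. P K \<Longrightarrow> A \<subseteq> K \<Longrightarrow> K \<subseteq> B \<Longrightarrow> K = A \<or> K = B"
  shows "dcc_on P B"
  unfolding dcc_on_def
proof (intro allI impI)
  fix W :: "nat \<Rightarrow> 'a set" assume W: "(\<forall>j. P (W j) \<and> W j \<subseteq> B) \<and> (\<forall>j. W (Suc j) \<subseteq> W j)"
  have W_anti: "m \<le> n \<Longrightarrow> W n \<subseteq> W m" for m n
    using W lift_Suc_antimono_le[of W m n] by blast
  have "0 \<in> A" "0 \<in> W j" for j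
    using subgroup \<open>P A\<close> W unfolding additive_subgroup_def by auto
  have "(\<forall>j. P (W j \<inter> A) \<and> W j \<inter> A \<subseteq> A) \<and> (\<forall>j. W (Suc j) \<inter> A \<subseteq> W j \<inter> A)"
    using W Int \<open>P A\<close> by blast
  then obtain N1 where N1: "\<forall>n\<ge>N1. W n \<inter> A = W N1 \<inter> A"
    using dcc_A[unfolded dcc_on_def, rule_format, of "\<lambda>j. W j \<inter> A"] by blast
  have "A \<subseteq> W j + A" for j
    using set_zero_plus2[OF \<open>0 \<in> W j\<close>] .
  moreover have "W j + A \<subseteq> B" for j
  proof
    fix x assume "x \<in> W j + A"
    then obtain w a where "x = w + a" "w \<in> W j" "a \<in> A"
      by (rule set_plus_elim)
    then show "x \<in> B"
      using W \<open>A \<subseteq> B\<close> subgroup[OF \<open>P B\<close>] unfolding additive_subgroup_def by blast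
  qed
  ultimately have gap_plus: "W j + A = A \<or> W j + A = B" for j
    using gap[of "W j + A"] plus[of "W j" A] W \<open>P A\<close> by blast
  have plus_anti: "m \<le> n \<Longrightarrow> W n + A \<subseteq> W m + A" for m n
    by (rule set_plus_mono2[OF W_anti order_refl])
  have "\<exists>N. \<forall>n\<ge>N. W n + A = W N + A"
    by (rule antimono_two_valued_eventually_const[where U = "\<lambda>j. W j + A" and A = A and B = B])
      (fact plus_anti, fact \<open>\<And>j. A \<subseteq> W j + A\<close>, fact gap_plus)
  then obtain N2 where N2: "\<forall>n\<ge>N2. W n + A = W N2 + A"
    by blast
  have "W n = W (max N1 N2)" if "n \<ge> max N1 N2" for n
  proof (rule additive_subgroup_eqI)
    show "W n \<inter> A = W (max N1 N2) \<inter> A" "W n + A = W (max N1 N2) + A"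
      using spec[OF N1, of n] spec[OF N1, of "max N1 N2"] spec[OF N2, of n]
        spec[OF N2, of "max N1 N2"] that by simp_all
  qed (use subgroup W W_anti[OF that] \<open>0 \<in> A\<close> in auto)
  then show "\<exists>N. \<forall>n\<ge>N. W n = W N" by blast
qed

definition left_principal :: "'a::ring_1 \<Rightarrow> 'a set" where
  "left_principal a = {r * a | r. True}"

definition right_principal :: "'a::ring_1 \<Rightarrow> 'a set" where
  "right_principal a = {a * r | r. True}"

lemma left_principal_iff: "x \<in> left_principal a \<longleftrightarrow> (\<exists>r. x = r * a)"
  by (simp add: left_principal_def)

lemma right_principal_iff: "x \<in> right_principal a \<longleftrightarrow> (\<exists>r. x = a * r)"
  by (simp add: right_principal_def)

lemma left_principal_self: "a \<in> left_principal a"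
  unfolding left_principal_iff by (rule exI[of _ 1]) simp

lemma right_principal_self: "a \<in> right_principal a"
  unfolding right_principal_iff by (rule exI[of _ 1]) simp

lemma left_idealI:
  assumes "0 \<in> I" "\<And>x y. x \<in> I \<Longrightarrow> y \<in> I \<Longrightarrow> x + y \<in> I" "\<And>x. x \<in> I \<Longrightarrow> - x \<in> I"
    "\<And>r x. x \<in> I \<Longrightarrow> r * x \<in> I"
  shows "left_ideal I"
  unfolding left_ideal_def using assms by blast

lemma right_idealI:
  assumes "0 \<in> I" "\<And>x y. x \<in> I \<Longrightarrow> y \<in> I \<Longrightarrow> x + y \<in> I" "\<And>x. x \<in> I \<Longrightarrow> - x \<in> I"
    "\<And>r x. x \<in> I \<Longrightarrow> x * r \<in> I"
  shows "right_ideal I"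
  unfolding right_ideal_def using assms by blast

lemma left_ideal_zero: "left_ideal I \<Longrightarrow> 0 \<in> I"
  and left_ideal_add: "left_ideal I \<Longrightarrow> x \<in> I \<Longrightarrow> y \<in> I \<Longrightarrow> x + y \<in> I"
  and left_ideal_minus: "left_ideal I \<Longrightarrow> x \<in> I \<Longrightarrow> - x \<in> I"
  and left_ideal_mult: "left_ideal I \<Longrightarrow> x \<in> I \<Longrightarrow> r * x \<in> I"
  unfolding left_ideal_def by blast+

lemma right_ideal_zero: "right_ideal I \<Longrightarrow> 0 \<in> I"
  and right_ideal_add: "right_ideal I \<Longrightarrow> x \<in> I \<Longrightarrow> y \<in> I \<Longrightarrow> x + y \<in> I"
  and right_ideal_minus: "right_ideal I \<Longrightarrow> x \<in> I \<Longrightarrow> - x \<in> I"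
  and right_ideal_mult: "right_ideal I \<Longrightarrow> x \<in> I \<Longrightarrow> x * r \<in> I"
  unfolding right_ideal_def by blast+

lemma left_ideal_diff: "left_ideal I \<Longrightarrow> x \<in> I \<Longrightarrow> y \<in> I \<Longrightarrow> x - y \<in> I"
  using left_ideal_add[of I x "- y"] left_ideal_minus[of I y] by simp

lemma left_ideal_left_principal: "left_ideal (left_principal a)"
proof (rule left_idealI)
  show "0 \<in> left_principal a"
    unfolding left_principal_iff by (rule exI[of _ 0]) simp
  show "x + y \<in> left_principal a" if xy: "x \<in> left_principal a" "y \<in> left_principal a" for x y
  proof -
    obtain r s where "x = r * a" "y = s * a"
      using xy unfolding left_principal_iff by blast
    then have "x + y = (r + s) * a"
      by (simp add: distrib_right)
    then show ?thesis
      unfolding left_principal_iff ..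
  qed
  show "- x \<in> left_principal a" if x: "x \<in> left_principal a" for x
  proof -
    obtain r where "x = r * a"
      using x unfolding left_principal_iff by blast
    then have "- x = (- r) * a"
      by simp
    then show ?thesis
      unfolding left_principal_iff ..
  qed
  show "r * x \<in> left_principal a" if x: "x \<in> left_principal a" for r x
  proof -
    obtain s where "x = s * a"
      using x unfolding left_principal_iff by blast
    then have "r * x = (r * s) * a"
      by (simp add: mult.assoc)
    then show ?thesis
      unfolding left_principal_iff ..
  qed
qed

lemma right_ideal_right_principal: "right_ideal (right_principal a)"
proof (rule right_idealI)
  show "0 \<in> right_principal a"
    unfolding right_principal_iff by (rule exI[of _ 0]) simp
  show "x + y \<in> right_principal a" if xy: "x \<in> right_principal a" "y \<in> right_principal a" for x y
  proof -
    obtain r s where "x = a * r" "y = a * s"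
      using xy unfolding right_principal_iff by blast
    then have "x + y = a * (r + s)"
      by (simp add: distrib_left)
    then show ?thesis
      unfolding right_principal_iff ..
  qed
  show "- x \<in> right_principal a" if x: "x \<in> right_principal a" for x
  proof -
    obtain r where "x = a * r"
      using x unfolding right_principal_iff by blast
    then have "- x = a * (- r)"
      by simp
    then show ?thesis
      unfolding right_principal_iff ..
  qed
  show "x * r \<in> right_principal a" if x: "x \<in> right_principal a" for r x
  proof -
    obtain s where "x = a * s"
      using x unfolding right_principal_iff by blast
    then have "x * r = a * (s * r)"
      by (simp add: mult.assoc)
    then show ?thesis
      unfolding right_principal_iff ..
  qed
qed

lemma left_ideal_Int: "left_ideal X \<Longrightarrow> left_ideal Y \<Longrightarrow> left_ideal (X \<inter> Y)"
  unfolding left_ideal_def by blast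

lemma right_ideal_Int: "right_ideal X \<Longrightarrow> right_ideal Y \<Longrightarrow> right_ideal (X \<inter> Y)"
  unfolding right_ideal_def by blast

lemma left_ideal_plus:
  assumes X: "left_ideal X" and Y: "left_ideal Y"
  shows "left_ideal (X + Y)"
proof (rule left_idealI)
  show "0 \<in> X + Y"
    using set_plus_intro[OF left_ideal_zero[OF X] left_ideal_zero[OF Y]] by simp
  show "p + q \<in> X + Y" if p: "p \<in> X + Y" and q: "q \<in> X + Y" for p q
  proof -
    obtain a b where "p = a + b" "a \<in> X" "b \<in> Y"
      using p by (rule set_plus_elim)
    moreover obtain c d where "q = c + d" "c \<in> X" "d \<in> Y"
      using q by (rule set_plus_elim)
    ultimately have "(a + c) + (b + d) \<in> X + Y"
      using X Y by (blast intro: set_plus_intro left_ideal_add)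
    moreover have "p + q = (a + c) + (b + d)"
      using \<open>p = a + b\<close> \<open>q = c + d\<close> by (simp add: algebra_simps)
    ultimately show ?thesis
      by simp
  qed
  show "- p \<in> X + Y" if p: "p \<in> X + Y" for p
  proof -
    obtain a b where "p = a + b" "a \<in> X" "b \<in> Y"
      using p by (rule set_plus_elim)
    then have "- a + - b \<in> X + Y"
      using X Y by (blast intro: set_plus_intro left_ideal_minus)
    moreover have "- p = - a + - b"
      using \<open>p = a + b\<close> by (simp add: algebra_simps)
    ultimately show ?thesis
      by simp
  qed
  show "r * p \<in> X + Y" if p: "p \<in> X + Y" for r p
  proof -
    obtain a b where "p = a + b" "a \<in> X" "b \<in> Y"
      using p by (rule set_plus_elim)
    then show ?thesis
      using X Y by (simp add: distrib_left left_ideal_mult set_plus_intro)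
  qed
qed

lemma right_ideal_plus:
  assumes X: "right_ideal X" and Y: "right_ideal Y"
  shows "right_ideal (X + Y)"
proof (rule right_idealI)
  show "0 \<in> X + Y"
    using set_plus_intro[OF right_ideal_zero[OF X] right_ideal_zero[OF Y]] by simp
  show "p + q \<in> X + Y" if p: "p \<in> X + Y" and q: "q \<in> X + Y" for p q
  proof -
    obtain a b where "p = a + b" "a \<in> X" "b \<in> Y"
      using p by (rule set_plus_elim)
    moreover obtain c d where "q = c + d" "c \<in> X" "d \<in> Y"
      using q by (rule set_plus_elim)
    ultimately have "(a + c) + (b + d) \<in> X + Y"
      using X Y by (blast intro: set_plus_intro right_ideal_add)
    moreover have "p + q = (a + c) + (b + d)"
      using \<open>p = a + b\<close> \<open>q = c + d\<close> by (simp add: algebra_simps)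
    ultimately show ?thesis
      by simp
  qed
  show "- p \<in> X + Y" if p: "p \<in> X + Y" for p
  proof -
    obtain a b where "p = a + b" "a \<in> X" "b \<in> Y"
      using p by (rule set_plus_elim)
    then have "- a + - b \<in> X + Y"
      using X Y by (blast intro: set_plus_intro right_ideal_minus)
    moreover have "- p = - a + - b"
      using \<open>p = a + b\<close> by (simp add: algebra_simps)
    ultimately show ?thesis
      by simp
  qed
  show "p * r \<in> X + Y" if p: "p \<in> X + Y" for r p
  proof -
    obtain a b where "p = a + b" "a \<in> X" "b \<in> Y"
      using p by (rule set_plus_elim)
    then show ?thesis
      using X Y by (simp add: distrib_right right_ideal_mult set_plus_intro)
  qed
qed

lemma subset_set_plus_left:
  fixes A B :: "'a::comm_monoid_add set"
  shows "0 \<in> B \<Longrightarrow> A \<subseteq> A + B"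
  using set_zero_plus2[of B A] by (simp add: add.commute)

lemma left_ideal_plus_subset:
  "left_ideal I \<Longrightarrow> X \<subseteq> I \<Longrightarrow> Y \<subseteq> I \<Longrightarrow> X + Y \<subseteq> I"
  by (auto elim!: set_plus_elim intro: left_ideal_add)

lemma left_principal_subset: "left_ideal I \<Longrightarrow> a \<in> I \<Longrightarrow> left_principal a \<subseteq> I"
  by (auto simp: left_principal_iff intro: left_ideal_mult)

lemma right_principal_subset: "right_ideal I \<Longrightarrow> a \<in> I \<Longrightarrow> right_principal a \<subseteq> I"
  by (auto simp: right_principal_iff intro: right_ideal_mult)

lemma additive_subgroup_left_ideal: "left_ideal X \<Longrightarrow> additive_subgroup X"
  unfolding left_ideal_def additive_subgroup_def by blast

lemma additive_subgroup_right_ideal: "right_ideal X \<Longrightarrow> additive_subgroup X"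
  unfolding right_ideal_def additive_subgroup_def by blast

lemma left_principal_zero: "left_principal (0::'a::ring_1) = {0}"
  by (auto simp: left_principal_iff)

lemma right_principal_one: "right_principal 1 = UNIV"
  by (auto simp: right_principal_iff)

lemma right_principal_zero: "right_principal (0::'a::ring_1) = {0}"
  by (auto simp: right_principal_iff)

section \<open>The left Ore condition\<close>

lemma linear_combinationI: "x = (\<Sum>i\<le>n. r i * g i) \<Longrightarrow> x \<in> {\<Sum>i\<le>n. r i * g i | r. True}"
  by blast

lemma left_ideal_linear_combinations:
  fixes g :: "nat \<Rightarrow> 'a::ring_1"
  shows "left_ideal {\<Sum>i\<le>n. r i * g i | r. True}" (is "left_ideal ?L")
proof (rule left_idealI)
  show "0 \<in> ?L"
    by (rule linear_combinationI[where r = "\<lambda>i. 0"]) simp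
  show "x + y \<in> ?L" if "x \<in> ?L" "y \<in> ?L" for x y
  proof -
    from that obtain r s where "x = (\<Sum>i\<le>n. r i * g i)" "y = (\<Sum>i\<le>n. s i * g i)"
      by blast
    then have "x + y = (\<Sum>i\<le>n. (r i + s i) * g i)"
      by (simp add: distrib_right sum.distrib)
    then show ?thesis
      by (rule linear_combinationI)
  qed
  show "- x \<in> ?L" if "x \<in> ?L" for x
  proof -
    from that obtain r where "x = (\<Sum>i\<le>n. r i * g i)"
      by blast
    then have "- x = (\<Sum>i\<le>n. (- r i) * g i)"
      by (simp add: sum_negf)
    then show ?thesis
      by (rule linear_combinationI)
  qed
  show "c * x \<in> ?L" if "x \<in> ?L" for c x
  proof -
    from that obtain r where "x = (\<Sum>i\<le>n. r i * g i)"
      by blast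
    then have "c * x = (\<Sum>i\<le>n. (c * r i) * g i)"
      by (simp add: sum_distrib_left mult.assoc)
    then show ?thesis
      by (rule linear_combinationI)
  qed
qed

lemma linear_combinations_mono:
  fixes g :: "nat \<Rightarrow> 'a::ring_1"
  shows "{\<Sum>i\<le>n. r i * g i | r. True} \<subseteq> {\<Sum>i\<le>Suc n. r i * g i | r. True}"
proof
  fix x assume "x \<in> {\<Sum>i\<le>n. r i * g i | r. True}"
  then obtain r where r: "x = (\<Sum>i\<le>n. r i * g i)"
    by blast
  define r' :: "nat \<Rightarrow> 'a" where "r' i = (if i \<le> n then r i else 0)" for i
  have "(\<Sum>i\<le>Suc n. r' i * g i) = (\<Sum>i\<le>n. r' i * g i) + r' (Suc n) * g (Suc n)"
    by (rule sum.atMost_Suc)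
  also have "\<dots> = x"
    unfolding r'_def r by simp
  finally show "x \<in> {\<Sum>i\<le>Suc n. r i * g i | r. True}"
    by (intro linear_combinationI) (rule sym)
qed

lemma generator_in_linear_combinations:
  fixes g :: "nat \<Rightarrow> 'a::ring_1"
  shows "g n \<in> {\<Sum>i\<le>n. r i * g i | r. True}"
proof (rule linear_combinationI)
  have "(\<Sum>i\<le>n. (if i = n then 1 else 0) * g i) = (\<Sum>i\<le>n. if i = n then g i else 0)"
    by (rule sum.cong) simp_all
  then show "g n = (\<Sum>i\<le>n. (if i = n then 1 else 0) * g i)"
    by simp
qed

text \<open>A relation \<open>q p\<^sup>n\<^sup>+\<^sup>1 = r q + s p\<close> gives
  \<open>(q p\<^sup>n - s) p \<in> Rp \<inter> Rq\<close>, hence \<open>q p\<^sup>n = s\<close> by regularity of \<open>p\<close>, one degree lower.\<close>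
lemma power_notin_lower_combinations:
  fixes p q :: "'a::ring_1"
  assumes p_regular: "\<And>x. x * p = 0 \<Longrightarrow> x = 0" and "q \<noteq> 0"
    and no_common: "\<And>a b. a * p = b * q \<Longrightarrow> a * p = 0"
  shows "q * p ^ Suc n \<noteq> (\<Sum>i\<le>n. r i * (q * p ^ i))"
proof (induction n arbitrary: r)
  case 0
  show ?case
  proof
    assume "q * p ^ Suc 0 = (\<Sum>i\<le>0. r i * (q * p ^ i))"
    then have "q * p = r 0 * q"
      by simp
    then have "q * p = 0"
      by (rule no_common)
    then show False
      using p_regular \<open>q \<noteq> 0\<close> by blast
  qed
next
  case (Suc n)
  show ?case
  proof
    assume h: "q * p ^ Suc (Suc n) = (\<Sum>i\<le>Suc n. r i * (q * p ^ i))"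
    define s where "s = (\<Sum>i\<le>n. r (Suc i) * (q * p ^ i))"
    have "(\<Sum>i\<le>Suc n. r i * (q * p ^ i)) = r 0 * (q * p ^ 0) + (\<Sum>i\<le>n. r (Suc i) * (q * p ^ Suc i))"
      by (rule sum.atMost_Suc_shift)
    also have "(\<Sum>i\<le>n. r (Suc i) * (q * p ^ Suc i)) = s * p"
      unfolding s_def sum_distrib_right by (simp only: power_Suc2 mult.assoc)
    finally have "q * p ^ Suc (Suc n) = r 0 * q + s * p"
      using h by simp
    moreover have "q * p ^ Suc (Suc n) = (q * p ^ Suc n) * p"
      by (simp only: power_Suc2 mult.assoc)
    ultimately have "(q * p ^ Suc n) * p - s * p = r 0 * q"
      by (simp add: algebra_simps)
    then have "(q * p ^ Suc n - s) * p = r 0 * q"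
      by (simp only: left_diff_distrib)
    then have "(q * p ^ Suc n - s) * p = 0"
      by (rule no_common)
    then have "q * p ^ Suc n - s = 0"
      by (rule p_regular)
    then have "q * p ^ Suc n = (\<Sum>i\<le>n. r (Suc i) * (q * p ^ i))"
      unfolding s_def by simp
    then show False
      using Suc.IH[of "\<lambda>i. r (Suc i)"] by blast
  qed
qed

text \<open>Otherwise the left ideals \<open>\<Sum>\<^sub>i\<^sub>\<le>\<^sub>n R q p\<^sup>i\<close> would form a strictly ascending chain.\<close>
lemma left_ore_condition:
  fixes p q :: "'a::ring_1"
  assumes "left_noetherian TYPE('a)"
    and p_regular: "\<And>x. x * p = 0 \<Longrightarrow> x = 0" and "q \<noteq> 0"
  shows "\<exists>a b. a * p = b * q \<and> a * p \<noteq> 0"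
proof (rule ccontr)
  assume "\<not> ?thesis"
  then have no_common: "\<And>a b. a * p = b * q \<Longrightarrow> a * p = 0"
    by blast
  define L where "L n = {\<Sum>i\<le>n. r i * (q * p ^ i) | r. True}" for n
  have "\<forall>n. left_ideal (L n)"
    unfolding L_def using left_ideal_linear_combinations[where g = "\<lambda>i. q * p ^ i"] by blast
  moreover have "\<forall>n. L n \<subseteq> L (Suc n)"
    unfolding L_def using linear_combinations_mono[where g = "\<lambda>i. q * p ^ i"] by blast
  ultimately obtain N where "\<forall>n\<ge>N. L n = L N"
    using assms(1)[unfolded left_noetherian_def, rule_format, of L] by blast
  then have "L (Suc N) = L N"
    using le_SucI[OF order_refl] by blast
  moreover have "q * p ^ Suc N \<in> L (Suc N)"
    unfolding L_def by (rule generator_in_linear_combinations[where g = "\<lambda>i. q * p ^ i"])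
  ultimately have "q * p ^ Suc N \<in> L N"
    by simp
  then obtain r where "q * p ^ Suc N = (\<Sum>i\<le>N. r i * (q * p ^ i))"
    unfolding L_def by blast
  moreover have "q * p ^ Suc N \<noteq> (\<Sum>i\<le>N. r i * (q * p ^ i))"
    by (rule power_notin_lower_combinations) (fact p_regular, fact \<open>q \<noteq> 0\<close>, fact no_common)
  ultimately show False
    by blast
qed

locale left_noetherian_local_ring =
  fixes M :: "'a::ring_1 set"
  assumes maximal_left_ideal_M: "maximal_left_ideal M"
    and maximal_left_ideal_unique: "\<And>N. maximal_left_ideal N \<Longrightarrow> N = M"
    and left_noetherian: "left_noetherian TYPE('a)"
begin

lemma left_ideal_M: "left_ideal M"
  using maximal_left_ideal_M by (simp add: maximal_left_ideal_def)

lemma M_neq_UNIV: "M \<noteq> UNIV"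
  using maximal_left_ideal_M by (simp add: maximal_left_ideal_def)

lemmas M_zero = left_ideal_zero[OF left_ideal_M]
  and M_add = left_ideal_add[OF left_ideal_M]
  and M_minus = left_ideal_minus[OF left_ideal_M]
  and M_mult_left = left_ideal_mult[OF left_ideal_M]

lemma one_notin_M: "1 \<notin> M"
proof
  assume "1 \<in> M"
  then have "r \<in> M" for r
    using M_mult_left[of 1 r] by simp
  then show False
    using M_neq_UNIV by auto
qed

lemma left_ascending_chain:
  "\<forall>I::nat \<Rightarrow> 'a set. (\<forall>n. left_ideal (I n)) \<and> (\<forall>n. I n \<subseteq> I (Suc n)) \<longrightarrow> (\<exists>N. \<forall>n\<ge>N. I n = I N)"
  using left_noetherian by (simp add: left_noetherian_def)

lemma proper_left_ideal_subset_M: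
  assumes "left_ideal I" "I \<noteq> UNIV"
  shows "I \<subseteq> M"
proof -
  have "\<exists>X. left_ideal X \<and> (I \<subseteq> X \<and> X \<noteq> UNIV) \<and> maximal_left_ideal X"
  proof (rule ascending_chain_reaches[OF left_ascending_chain])
    show "left_ideal I" "I \<subseteq> I \<and> I \<noteq> UNIV"
      using assms by auto
  next
    fix X assume X: "left_ideal X" "I \<subseteq> X \<and> X \<noteq> UNIV" "\<not> maximal_left_ideal X"
    then obtain J where "left_ideal J" "X \<subseteq> J" "J \<noteq> UNIV" "J \<noteq> X"
      unfolding maximal_left_ideal_def by blast
    then show "\<exists>Y. left_ideal Y \<and> (I \<subseteq> Y \<and> Y \<noteq> UNIV) \<and> X \<subset> Y"
      using X by blast
  qed
  then show ?thesis
    using maximal_left_ideal_unique by blast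
qed

lemma left_invertible:
  assumes "x \<notin> M"
  shows "\<exists>y. y * x = 1"
proof -
  have "left_principal x = UNIV"
    using assms left_principal_self proper_left_ideal_subset_M[OF left_ideal_left_principal] by blast
  then have "1 \<in> left_principal x"
    by simp
  then show ?thesis
    unfolding left_principal_iff by metis
qed

text \<open>A left inverse \<open>y\<close> of \<open>x \<notin> M\<close> is two-sided: \<open>x * y\<close> is idempotent, and of the
  idempotents \<open>e\<close> and \<open>1 - e\<close> one lies outside \<open>M\<close>, hence is left invertible.\<close>
lemma invertible:
  assumes "x \<notin> M"
  shows "\<exists>y. y * x = 1 \<and> x * y = 1"
proof -
  obtain y where yx: "y * x = 1"
    using left_invertible assms by blast
  define e where "e = x * y"
  have ee: "e * e = e"
    unfolding e_def by (metis mult.assoc mult_1 yx)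
  have "e \<notin> M \<or> 1 - e \<notin> M"
    using M_add[of e "1 - e"] one_notin_M by auto
  then have "e = 1"
  proof
    assume "e \<notin> M"
    then obtain r where "r * e = 1"
      using left_invertible by blast
    then have "e = r * (e * e)"
      by (simp add: mult.assoc[symmetric])
    then show ?thesis
      using ee \<open>r * e = 1\<close> by simp
  next
    assume "1 - e \<notin> M"
    then obtain r where "r * (1 - e) = 1"
      using left_invertible by blast
    then have "e = r * (1 - e) * e"
      by simp
    also have "\<dots> = 0"
      using ee by (simp add: mult.assoc algebra_simps)
    finally have "y * (x * y) = 0"
      unfolding e_def by simp
    then have "y = 0"
      using yx by (simp add: mult.assoc[symmetric])
    then show ?thesis
      using yx by simp
  qed
  then show ?thesis
    using yx unfolding e_def by auto
qed

lemma M_not_right_invertible: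
  assumes "a \<in> M"
  shows "a * z \<noteq> 1"
proof
  assume az: "a * z = 1"
  have "z \<notin> M"
    using M_mult_left[of z a] az one_notin_M by auto
  then obtain w where w: "w * z = 1" "z * w = 1"
    using invertible by blast
  have "a = a * (z * w)"
    using w by simp
  also have "\<dots> = w"
    using az by (simp add: mult.assoc[symmetric])
  finally have "z * a = 1"
    using w by simp
  then show False
    using M_mult_left[OF assms, of z] one_notin_M by simp
qed

lemma M_mult_right:
  assumes "a \<in> M"
  shows "a * r \<in> M"
proof (rule ccontr)
  assume "a * r \<notin> M"
  then obtain v where "(a * r) * v = 1"
    using invertible by blast
  then have "a * (r * v) = 1"
    by (simp add: mult.assoc)
  then show False
    using M_not_right_invertible assms by blast
qed

lemma right_ideal_M: "right_ideal M"
  unfolding right_ideal_def using M_zero M_add M_minus M_mult_right by blast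

lemma one_minus_notin_M:
  assumes "m \<in> M"
  shows "1 - m \<notin> M"
  using M_add[of "1 - m" m] assms one_notin_M by auto

lemma mult_notin_M:
  assumes "u \<notin> M" "v \<notin> M"
  shows "u * v \<notin> M"
proof
  assume uv: "u * v \<in> M"
  obtain u' v' where u': "u' * u = 1" and v': "v' * v = 1"
    using invertible assms by blast
  have "(v' * u') * (u * v) = v' * (u' * u) * v"
    by (simp add: mult.assoc)
  also have "\<dots> = 1"
    using u' v' by simp
  finally show False
    using M_mult_left[OF uv, of "v' * u'"] one_notin_M by simp
qed

lemma unit_cancel_left:
  assumes "u \<notin> M" "u * x = 0"
  shows "x = 0"
proof -
  obtain y where y: "y * u = 1"
    using invertible assms(1) by blast
  have "x = (y * u) * x"
    using y by simp
  also have "\<dots> = y * (u * x)"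
    by (simp add: mult.assoc)
  finally show ?thesis
    using assms(2) by simp
qed

lemma unit_cancel_right:
  assumes "u \<notin> M" "x * u = 0"
  shows "x = 0"
proof -
  obtain y where y: "u * y = 1"
    using invertible assms(1) by blast
  have "x = x * (u * y)"
    using y by simp
  also have "\<dots> = (x * u) * y"
    by (simp add: mult.assoc)
  finally show ?thesis
    using assms(2) by simp
qed

lemma zero_if_eq_M_mult:
  assumes "m \<in> M" "x = m * x"
  shows "x = 0"
proof -
  have "(1 - m) * x = 0"
    using assms(2) by (simp add: left_diff_distrib)
  then show ?thesis
    using unit_cancel_left one_minus_notin_M[OF assms(1)] by blast
qed

lemma zero_if_eq_mult_M:
  assumes "m \<in> M" "x = x * m"
  shows "x = 0"
proof -
  have "x * (1 - m) = 0"
    using assms(2) by (simp add: right_diff_distrib)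
  then show ?thesis
    using unit_cancel_right one_minus_notin_M[OF assms(1)] by blast
qed

lemma sum_in_M: "finite S \<Longrightarrow> (\<And>s. s \<in> S \<Longrightarrow> f s \<in> M) \<Longrightarrow> sum f S \<in> M"
proof (induction S rule: finite_induct)
  case empty
  then show ?case
    using M_zero by simp
next
  case (insert x F)
  then show ?case
    using M_add by simp
qed

lemma mult_in_right_principal_mult_unit:
  assumes "u \<notin> M"
  shows "f * b \<in> right_principal (f * u)"
proof -
  obtain p where "u * p = 1"
    using invertible assms by blast
  then have "f * b = (f * u) * (p * b)"
    by (simp add: mult.assoc[symmetric]) (simp add: mult.assoc)
  then show ?thesis
    unfolding right_principal_iff by blast
qed

lemma right_principal_mult_unit:
  assumes "u \<notin> M"
  shows "right_principal (x * u) = right_principal x"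
proof
  show "right_principal (x * u) \<subseteq> right_principal x"
    by (auto simp: right_principal_iff mult.assoc)
  obtain v where "u * v = 1"
    using invertible assms by blast
  then have "x = (x * u) * v"
    by (simp add: mult.assoc)
  then show "right_principal x \<subseteq> right_principal (x * u)"
    by (auto simp: right_principal_iff) (metis mult.assoc)
qed

end

section \<open>Two-generated modules and the right chain property\<close>

text \<open>Pairs carry the componentwise additive group of Product_Plus; \<open>scale2\<close> is the left module
  structure of \<open>R\<^sup>2\<close>, in which \<open>lin2 S c\<close> is the linear combination \<open>\<Sum>s\<in>S. c s \<cdot> s\<close>.\<close>
definition scale2 :: "'a::ring_1 \<Rightarrow> 'a \<times> 'a \<Rightarrow> 'a \<times> 'a" where
  "scale2 r v = (r * fst v, r * snd v)"

lemma scale2_Pair [simp]: "scale2 r (x, y) = (r * x, r * y)"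
  by (simp add: scale2_def)

lemma scale2_one [simp]: "scale2 1 v = v"
  by (simp add: scale2_def)

lemma scale2_zero [simp]: "scale2 0 v = 0"
  by (simp add: scale2_def zero_prod_def)

lemma scale2_scale2 [simp]: "scale2 r (scale2 s v) = scale2 (r * s) v"
  by (simp add: scale2_def mult.assoc)

lemma scale2_add_left: "scale2 (r + s) v = scale2 r v + scale2 s v"
  by (simp add: scale2_def distrib_right)

lemma scale2_diff_left: "scale2 (r - s) v = scale2 r v - scale2 s v"
  by (simp add: scale2_def left_diff_distrib)

lemma scale2_diff_right: "scale2 r (v - w) = scale2 r v - scale2 r w"
  by (simp add: scale2_def right_diff_distrib prod_eq_iff)

lemma scale2_sum_left: "scale2 (sum f S) v = (\<Sum>s\<in>S. scale2 (f s) v)"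
  by (simp add: scale2_def sum_distrib_right sum_prod)

lemma lin2_eq_sum: "lin2 S c = (\<Sum>s\<in>S. scale2 (c s) s)"
  by (simp add: lin2_def scale2_def sum_prod)

lemma lin2_linear: "lin2 S (\<lambda>s. p * f s + q * g s) = scale2 p (lin2 S f) + scale2 q (lin2 S g)"
  by (simp add: lin2_def distrib_right sum.distrib sum_distrib_left mult.assoc)

lemma lin2_diff: "lin2 S (\<lambda>s. f s - g s) = lin2 S f - lin2 S g"
  by (simp add: lin2_def left_diff_distrib sum_subtractf)

lemma lin2_delta:
  assumes "finite S" "s0 \<in> S"
  shows "lin2 S (\<lambda>s. if s = s0 then 1 else 0) = s0"
proof -
  have "(\<Sum>s\<in>S. (if s = s0 then 1 else 0) * h s) = h s0" for h :: "'a \<times> 'a \<Rightarrow> 'a"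
  proof -
    have "(\<Sum>s\<in>S. (if s = s0 then 1 else 0) * h s) = (\<Sum>s\<in>S. if s = s0 then h s else 0)"
      by (rule sum.cong) simp_all
    then show ?thesis
      using assms by simp
  qed
  then show ?thesis
    by (simp add: lin2_def)
qed

lemma lin2_expand_generator:
  assumes r1: "(1, 0) - lin2 S a = scale2 r1 v" and r2: "(0, 1) - lin2 S b = scale2 r2 v"
  shows "lin2 S (\<lambda>s. fst v * a s + snd v * b s) = scale2 (1 - (fst v * r1 + snd v * r2)) v"
proof -
  have v_eq: "scale2 (fst v) (1, 0) + scale2 (snd v) (0, 1) = v"
    by (simp add: prod_eq_iff)
  have "lin2 S a = (1, 0) - scale2 r1 v" "lin2 S b = (0, 1) - scale2 r2 v"
    unfolding r1[symmetric] r2[symmetric] by simp_all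
  then have "lin2 S (\<lambda>s. fst v * a s + snd v * b s)
      = scale2 (fst v) ((1, 0) - scale2 r1 v) + scale2 (snd v) ((0, 1) - scale2 r2 v)"
    unfolding lin2_linear by simp
  also have "\<dots> = (scale2 (fst v) (1, 0) + scale2 (snd v) (0, 1)) - scale2 (fst v * r1 + snd v * r2) v"
    by (simp add: scale2_diff_right scale2_add_left algebra_simps)
  also have "\<dots> = scale2 (1 - (fst v * r1 + snd v * r2)) v"
    by (simp only: v_eq scale2_diff_left scale2_one)
  finally show ?thesis .
qed

lemma left_submodule2_add: "left_submodule2 N \<Longrightarrow> u \<in> N \<Longrightarrow> v \<in> N \<Longrightarrow> u + v \<in> N"
  and left_submodule2_minus: "left_submodule2 N \<Longrightarrow> u \<in> N \<Longrightarrow> - u \<in> N"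
  and left_submodule2_scale2: "left_submodule2 N \<Longrightarrow> u \<in> N \<Longrightarrow> scale2 r u \<in> N"
  unfolding left_submodule2_def scale2_def by (simp_all add: plus_prod_def uminus_prod_def)

lemma left_submodule2_cyclic: "left_submodule2 {scale2 r v | r. True}"
  unfolding left_submodule2_def
proof (intro conjI ballI allI impI)
  show "(0, 0) \<in> {scale2 r v | r. True}"
    by (rule CollectI, rule exI[of _ 0]) (simp add: zero_prod_def)
next
  fix u w assume "u \<in> {scale2 r v | r. True}" "w \<in> {scale2 r v | r. True}"
  then obtain r s where "u = scale2 r v" "w = scale2 s v"
    by blast
  then show "(fst u + fst w, snd u + snd w) \<in> {scale2 r v | r. True}"
    by (intro CollectI exI[of _ "r + s"]) (simp add: scale2_def distrib_right)
next
  fix u assume "u \<in> {scale2 r v | r. True}"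
  then obtain r where "u = scale2 r v"
    by blast
  then show "(- fst u, - snd u) \<in> {scale2 r v | r. True}"
    by (intro CollectI exI[of _ "- r"]) (simp add: scale2_def)
next
  fix s u assume "u \<in> {scale2 r v | r. True}"
  then obtain r where "u = scale2 r v"
    by blast
  then show "(s * fst u, s * snd u) \<in> {scale2 r v | r. True}"
    by (intro CollectI exI[of _ "s * r"]) (simp add: scale2_def mult.assoc)
qed

lemma quot2_dsum_cyclicE:
  assumes "quot2_dsum_cyclic N"
  obtains S a b where "finite S" "(1, 0) - lin2 S a \<in> N" "(0, 1) - lin2 S b \<in> N"
    "\<And>c. lin2 S c \<in> N \<Longrightarrow> \<forall>s\<in>S. scale2 (c s) s \<in> N"
proof -
  obtain S where "finite S"
    and generate: "\<forall>u. \<exists>c. (fst u - fst (lin2 S c), snd u - snd (lin2 S c)) \<in> N"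
    and independent: "\<forall>c. lin2 S c \<in> N \<longrightarrow> (\<forall>s\<in>S. (c s * fst s, c s * snd s) \<in> N)"
    using assms unfolding quot2_dsum_cyclic_def by blast
  have diff_eq: "(fst u - fst w, snd u - snd w) = u - w" for u w :: "'a \<times> 'a"
    by (simp add: prod_eq_iff)
  obtain a where "(1, 0) - lin2 S a \<in> N"
    using generate[rule_format, of "(1, 0)"] unfolding diff_eq by blast
  moreover obtain b where "(0, 1) - lin2 S b \<in> N"
    using generate[rule_format, of "(0, 1)"] unfolding diff_eq by blast
  ultimately show ?thesis
    using that \<open>finite S\<close> independent unfolding scale2_def by blast
qed

context left_noetherian_local_ring
begin

lemma scale2_unit_cancel:
  assumes "u \<notin> M" "scale2 u v = 0"
  shows "v = 0"
  using assms unit_cancel_left[OF assms(1)] by (simp add: scale2_def prod_eq_iff)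

text \<open>Expanding \<open>s0 = fst s0 \<cdot> (1,0) + snd s0 \<cdot> (0,1)\<close> along the decomposition and comparing
  \<open>s0\<close>-components gives \<open>(m - 1) s0 \<in> N\<close> with \<open>m \<in> M\<close>.\<close>
lemma decomposition_generator_in_submodule:
  assumes N: "left_submodule2 N"
    and a: "(1, 0) - lin2 S a \<in> N" and b: "(0, 1) - lin2 S b \<in> N"
    and independent: "\<And>c. lin2 S c \<in> N \<Longrightarrow> \<forall>s\<in>S. scale2 (c s) s \<in> N"
    and "finite S" "s0 \<in> S" "fst s0 \<in> M" "snd s0 \<in> M"
  shows "s0 \<in> N"
proof -
  define d where "d s = fst s0 * a s + snd s0 * b s - (if s = s0 then 1 else 0)" for s
  have s0_eq: "scale2 (fst s0) (1, 0) + scale2 (snd s0) (0, 1) = s0"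
    by (simp add: prod_eq_iff)
  have "lin2 S d = scale2 (fst s0) (lin2 S a) + scale2 (snd s0) (lin2 S b) - s0"
    unfolding d_def lin2_diff lin2_linear lin2_delta[OF \<open>finite S\<close> \<open>s0 \<in> S\<close>] ..
  also have "\<dots> = scale2 (fst s0) (lin2 S a) + scale2 (snd s0) (lin2 S b)
      - (scale2 (fst s0) (1, 0) + scale2 (snd s0) (0, 1))"
    by (simp only: s0_eq)
  also have "\<dots> = - (scale2 (fst s0) ((1, 0) - lin2 S a) + scale2 (snd s0) ((0, 1) - lin2 S b))"
    by (simp add: scale2_diff_right algebra_simps)
  finally have "lin2 S d \<in> N"
    using left_submodule2_minus[OF N left_submodule2_add[OF N
        left_submodule2_scale2[OF N a] left_submodule2_scale2[OF N b]]] by simp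
  then have in_N: "scale2 (d s0) s0 \<in> N"
    using independent \<open>s0 \<in> S\<close> by blast
  have "fst s0 * a s0 + snd s0 * b s0 \<in> M"
    using M_add[OF M_mult_right M_mult_right] \<open>fst s0 \<in> M\<close> \<open>snd s0 \<in> M\<close> .
  then have "- d s0 \<notin> M"
    using one_minus_notin_M by (simp add: d_def)
  then have "d s0 \<notin> M"
    using M_minus by force
  then obtain w where "w * d s0 = 1"
    using invertible by blast
  then have "s0 = scale2 w (scale2 (d s0) s0)"
    by simp
  then show ?thesis
    using left_submodule2_scale2[OF N in_N, of w] by simp
qed

text \<open>The coefficients \<open>c s = fst v * a s + snd v * b s\<close> of \<open>v\<close> along the decomposition satisfy
  \<open>c s \<cdot> s = T s \<cdot> v\<close>, and \<open>\<Sum>s. T s\<close> must be a unit.\<close>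
lemma decomposition_cyclic_generator_multiple:
  assumes "v \<noteq> 0" "fst v \<in> M" "snd v \<in> M"
    and N: "N = {scale2 r v | r. True}"
    and a: "(1, 0) - lin2 S a \<in> N" and b: "(0, 1) - lin2 S b \<in> N"
    and independent: "\<And>c. lin2 S c \<in> N \<Longrightarrow> \<forall>s\<in>S. scale2 (c s) s \<in> N"
    and "finite S"
  shows "\<exists>s0\<in>S. \<exists>f\<in>M. v = scale2 f s0"
proof -
  obtain r1 where r1: "(1, 0) - lin2 S a = scale2 r1 v"
    using a unfolding N by blast
  obtain r2 where r2: "(0, 1) - lin2 S b = scale2 r2 v"
    using b unfolding N by blast
  define c where "c s = fst v * a s + snd v * b s" for s
  define k where "k = fst v * r1 + snd v * r2"
  have "k \<in> M"
    unfolding k_def using M_add[OF M_mult_right M_mult_right] \<open>fst v \<in> M\<close> \<open>snd v \<in> M\<close> .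
  have lin_c: "lin2 S c = scale2 (1 - k) v"
    unfolding c_def k_def by (rule lin2_expand_generator[OF r1 r2])
  then have "\<forall>s\<in>S. scale2 (c s) s \<in> N"
    using independent unfolding N by blast
  then have "\<forall>s\<in>S. \<exists>t. scale2 (c s) s = scale2 t v"
    unfolding N by blast
  then obtain T where T: "\<forall>s\<in>S. scale2 (c s) s = scale2 (T s) v"
    by (rule bchoice[elim_format]) blast
  have "scale2 (sum T S) v = lin2 S c"
    unfolding scale2_sum_left lin2_eq_sum using T by (intro sum.cong) simp_all
  then have "scale2 (1 - k - sum T S) v = 0"
    using lin_c by (simp add: scale2_diff_left)
  then have "1 - k - sum T S \<in> M"
    using scale2_unit_cancel \<open>v \<noteq> 0\<close> by blast
  then have "1 - sum T S \<in> M"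
    using M_add[OF _ \<open>k \<in> M\<close>] by fastforce
  then have "sum T S \<notin> M"
    using one_minus_notin_M by fastforce
  then obtain s0 where "s0 \<in> S" "T s0 \<notin> M"
    using sum_in_M[OF \<open>finite S\<close>, of T] by blast
  then obtain w where w: "w * T s0 = 1"
    using invertible by blast
  have "scale2 (w * c s0) s0 = scale2 w (scale2 (c s0) s0)"
    by simp
  also have "\<dots> = scale2 (w * T s0) v"
    using T \<open>s0 \<in> S\<close> by simp
  finally have "v = scale2 (w * c s0) s0"
    using w by simp
  moreover have "w * c s0 \<in> M"
    unfolding c_def using M_mult_left[OF M_add[OF M_mult_right M_mult_right]] \<open>fst v \<in> M\<close> \<open>snd v \<in> M\<close> .
  ultimately show ?thesis
    using \<open>s0 \<in> S\<close> by blast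
qed

lemma right_chain_in_M_if_two_generated_decompose:
  assumes decompose: "\<forall>N::('a \<times> 'a) set. left_submodule2 N \<longrightarrow> quot2_dsum_cyclic N"
    and "x \<in> M" "y \<in> M" "(x, y) \<noteq> 0"
  shows "x \<in> right_principal y \<or> y \<in> right_principal x"
proof -
  define v where "v = (x, y)"
  define N where "N = {scale2 r v | r. True}"
  have "quot2_dsum_cyclic N"
    unfolding N_def by (rule decompose[rule_format, OF left_submodule2_cyclic])
  then obtain S a b where "finite S" and a: "(1, 0) - lin2 S a \<in> N" and b: "(0, 1) - lin2 S b \<in> N"
    and independent: "\<And>c. lin2 S c \<in> N \<Longrightarrow> \<forall>s\<in>S. scale2 (c s) s \<in> N"
    by (elim quot2_dsum_cyclicE) (rule that)
  have "v \<noteq> 0" "fst v \<in> M" "snd v \<in> M"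
    using assms(2-4) unfolding v_def by simp_all
  then obtain s0 f where "s0 \<in> S" "f \<in> M" and v: "v = scale2 f s0"
    using decomposition_cyclic_generator_multiple[OF _ _ _ N_def a b independent \<open>finite S\<close>] by blast
  then have x: "x = f * fst s0" and y: "y = f * snd s0"
    unfolding v_def by (simp_all add: scale2_def)
  consider "fst s0 \<notin> M" | "snd s0 \<notin> M" | "fst s0 \<in> M" "snd s0 \<in> M"
    by blast
  then show ?thesis
  proof cases
    case 3
    then have "s0 \<in> N"
      using decomposition_generator_in_submodule[OF left_submodule2_cyclic[of v, folded N_def]
          a b independent \<open>finite S\<close> \<open>s0 \<in> S\<close>] by blast
    then obtain g where "scale2 g v = s0"
      unfolding N_def by blast
    have "scale2 (f * g) v = scale2 f (scale2 g v)"
      by simp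
    also have "\<dots> = v"
      by (simp only: \<open>scale2 g v = s0\<close> v[symmetric])
    finally have "scale2 (1 - f * g) v = 0"
      by (simp add: scale2_diff_left)
    moreover have "1 - f * g \<notin> M"
      using one_minus_notin_M M_mult_right \<open>f \<in> M\<close> by blast
    ultimately show ?thesis
      using scale2_unit_cancel \<open>v \<noteq> 0\<close> by blast
  qed (use mult_in_right_principal_mult_unit x y in blast)+
qed

theorem right_chain_if_two_generated_decompose:
  fixes x y :: 'a
  assumes "\<forall>N::('a \<times> 'a) set. left_submodule2 N \<longrightarrow> quot2_dsum_cyclic N"
  shows "x \<in> right_principal y \<or> y \<in> right_principal x"
proof -
  consider "x \<notin> M" | "y \<notin> M" | "(x, y) = 0" | "x \<in> M" "y \<in> M" "(x, y) \<noteq> 0"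
    by (cases "x \<in> M"; cases "y \<in> M"; cases "(x, y) = 0") simp_all
  then show ?thesis
  proof cases
    case 3
    then have "x = y * 0"
      by (simp add: zero_prod_def)
    then show ?thesis
      unfolding right_principal_iff by blast
  next
    case 4
    then show ?thesis
      using right_chain_in_M_if_two_generated_decompose assms by blast
  qed (use mult_in_right_principal_mult_unit[of _ 1] in auto)
qed

end

section \<open>Noetherian local right chain rings\<close>

locale noetherian_right_chain_ring = left_noetherian_local_ring M for M :: "'a::ring_1 set" +
  assumes right_noetherian: "right_noetherian TYPE('a)"
    and right_chain: "\<And>x y :: 'a. x \<in> right_principal y \<or> y \<in> right_principal x"
begin

lemma right_ascending_chain:
  "\<forall>I::nat \<Rightarrow> 'a set. (\<forall>n. right_ideal (I n)) \<and> (\<forall>n. I n \<subseteq> I (Suc n)) \<longrightarrow> (\<exists>N. \<forall>n\<ge>N. I n = I N)"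
  using right_noetherian by (simp add: right_noetherian_def)

text \<open>Climb the chain of principal right ideals inside \<open>I\<close>: an element \<open>z \<in> I\<close> outside \<open>aR\<close>
  has \<open>aR \<subset> zR\<close> by the chain property.\<close>
lemma right_ideal_principal:
  fixes I :: "'a set"
  assumes I: "right_ideal I"
  shows "\<exists>a. I = right_principal a"
proof -
  have "\<exists>X. right_ideal X \<and> (X \<subseteq> I \<and> (\<exists>a. X = right_principal a)) \<and> X = I"
  proof (rule ascending_chain_reaches[OF right_ascending_chain, where A = "right_principal 0"
        and Q = "\<lambda>X. X \<subseteq> I \<and> (\<exists>a. X = right_principal a)" and G = "\<lambda>X. X = I"])
    show "right_ideal (right_principal 0)"
      by (rule right_ideal_right_principal)
    show "right_principal 0 \<subseteq> I \<and> (\<exists>a. right_principal 0 = right_principal a)"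
      using right_ideal_zero[OF I] by (auto simp: right_principal_iff)
  next
    fix X assume X: "right_ideal X" "X \<subseteq> I \<and> (\<exists>a. X = right_principal a)" "X \<noteq> I"
    then obtain a where a: "X = right_principal a"
      by blast
    obtain z where z: "z \<in> I" "z \<notin> X"
      using X by blast
    then have "a \<in> right_principal z"
      using right_chain[of a z] a by blast
    then have "X \<subseteq> right_principal z"
      unfolding a by (rule right_principal_subset[OF right_ideal_right_principal])
    then have "X \<subset> right_principal z"
      using z right_principal_self by blast
    then show "\<exists>Y. right_ideal Y \<and> (Y \<subseteq> I \<and> (\<exists>a. Y = right_principal a)) \<and> X \<subset> Y"
      using right_ideal_right_principal right_principal_subset[OF I z(1)] by blast
  qed
  then show ?thesis
    by blast
qed

definition \<pi> :: 'a where
  "\<pi> = (SOME p. M = right_principal p)"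

lemma M_eq_right_principal_pi: "M = right_principal \<pi>"
  unfolding \<pi>_def using right_ideal_principal[OF right_ideal_M] by (rule someI_ex)

lemma M_iff: "m \<in> M \<longleftrightarrow> (\<exists>r. m = \<pi> * r)"
  by (subst M_eq_right_principal_pi) (rule right_principal_iff)

lemma pi_in_M: "\<pi> \<in> M"
  unfolding M_iff by (intro exI[of _ 1]) simp

lemma mult_pi_power_commute: "\<exists>r'. r * \<pi> ^ k = \<pi> ^ k * r'"
proof (induction k arbitrary: r)
  case 0
  then show ?case
    by (intro exI[of _ r]) simp
next
  case (Suc k)
  obtain r1 where r1: "r * \<pi> ^ k = \<pi> ^ k * r1"
    using Suc by blast
  obtain r2 where r2: "r1 * \<pi> = \<pi> * r2"
    using M_mult_left[OF pi_in_M, of r1] unfolding M_iff by blast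
  have "r * \<pi> ^ Suc k = (r * \<pi> ^ k) * \<pi>"
    by (simp only: power_Suc2 mult.assoc)
  also have "\<dots> = \<pi> ^ k * (r1 * \<pi>)"
    using r1 by (simp add: mult.assoc)
  also have "\<dots> = \<pi> ^ Suc k * r2"
    using r2 by (simp only: power_Suc2 mult.assoc)
  finally show ?case
    by blast
qed

lemma left_ideal_pi_power: "left_ideal (right_principal (\<pi> ^ k))"
proof -
  have "r * x \<in> right_principal (\<pi> ^ k)" if x: "x \<in> right_principal (\<pi> ^ k)" for r x
  proof -
    obtain s where s: "x = \<pi> ^ k * s"
      using x unfolding right_principal_iff by blast
    obtain r' where r': "r * \<pi> ^ k = \<pi> ^ k * r'"
      using mult_pi_power_commute by blast
    have "r * x = \<pi> ^ k * (r' * s)"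
      using s r' by (simp add: mult.assoc[symmetric])
    then show ?thesis
      unfolding right_principal_iff by blast
  qed
  then show ?thesis
    using right_ideal_right_principal[of "\<pi> ^ k"] unfolding left_ideal_def right_ideal_def by blast
qed

lemma right_principal_pi_power_Suc_subset: "right_principal (\<pi> ^ Suc k) \<subseteq> right_principal (\<pi> ^ k)"
proof
  fix x assume "x \<in> right_principal (\<pi> ^ Suc k)"
  then obtain r where "x = \<pi> ^ Suc k * r"
    unfolding right_principal_iff by blast
  then have "x = \<pi> ^ k * (\<pi> * r)"
    by (simp only: power_Suc2 mult.assoc)
  then show "x \<in> right_principal (\<pi> ^ k)"
    unfolding right_principal_iff by blast
qed

lemma M_mult_pi_power:
  assumes "m \<in> M" "x \<in> right_principal (\<pi> ^ k)"
  shows "m * x \<in> right_principal (\<pi> ^ Suc k)"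
proof -
  obtain s where s: "m = \<pi> * s"
    using assms(1) by (auto simp: M_iff)
  obtain y where y: "x = \<pi> ^ k * y"
    using assms(2) by (auto simp: right_principal_iff)
  obtain s' where s': "s * \<pi> ^ k = \<pi> ^ k * s'"
    using mult_pi_power_commute by blast
  have "m * x = \<pi> * (s * \<pi> ^ k) * y"
    using s y by (simp add: mult.assoc)
  also have "\<dots> = \<pi> ^ Suc k * (s' * y)"
    using s' by (simp add: mult.assoc)
  finally show ?thesis
    unfolding right_principal_iff by blast
qed

lemma pi_power_unit_decomp:
  assumes "x \<in> right_principal (\<pi> ^ k)" "x \<notin> right_principal (\<pi> ^ Suc k)"
  shows "\<exists>u. u \<notin> M \<and> x = \<pi> ^ k * u"
proof -
  obtain u where u: "x = \<pi> ^ k * u"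
    using assms(1) by (auto simp: right_principal_iff)
  have "u \<notin> M"
  proof
    assume "u \<in> M"
    then obtain v where "u = \<pi> * v"
      by (auto simp: M_iff)
    then have "x = \<pi> ^ Suc k * v"
      using u by (simp only: power_Suc2 mult.assoc)
    then show False
      using assms(2) by (auto simp: right_principal_iff)
  qed
  then show ?thesis
    using u by blast
qed

lemma pi_power_unit_decomp_if_notin:
  "x \<notin> right_principal (\<pi> ^ m) \<Longrightarrow> \<exists>k u. u \<notin> M \<and> x = \<pi> ^ k * u"
proof (induction m)
  case 0
  then show ?case
    by (simp add: right_principal_one)
next
  case (Suc m)
  then show ?case
    using pi_power_unit_decomp by (cases "x \<in> right_principal (\<pi> ^ m)") blast+
qed

lemma right_principal_pi_power_subset:
  assumes "right_ideal I" "u \<notin> M" "\<pi> ^ k * u \<in> I"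
  shows "right_principal (\<pi> ^ k) \<subseteq> I"
proof -
  obtain v where "u * v = 1"
    using invertible assms(2) by blast
  then have "(\<pi> ^ k * u) * v = \<pi> ^ k"
    by (simp add: mult.assoc)
  then have "\<pi> ^ k \<in> I"
    using right_ideal_mult[OF assms(1,3)] by metis
  then show ?thesis
    by (rule right_principal_subset[OF assms(1)])
qed

subsection \<open>Nilpotent \<open>\<pi>\<close>: the Artinian case\<close>

lemma right_ideal_between_pi_powers:
  assumes K: "right_ideal K" "right_principal (\<pi> ^ Suc k) \<subseteq> K" "K \<subseteq> right_principal (\<pi> ^ k)"
  shows "K = right_principal (\<pi> ^ Suc k) \<or> K = right_principal (\<pi> ^ k)"
proof (cases "K = right_principal (\<pi> ^ Suc k)")
  case False
  then obtain x where "x \<in> K" "x \<notin> right_principal (\<pi> ^ Suc k)"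
    using K by blast
  moreover from this obtain u where "u \<notin> M" "x = \<pi> ^ k * u"
    using pi_power_unit_decomp K(3) by blast
  ultimately have "right_principal (\<pi> ^ k) \<subseteq> K"
    using right_principal_pi_power_subset[OF K(1)] by blast
  then show ?thesis
    using K by blast
qed simp

text \<open>A new element \<open>l + r g\<close> of \<open>K\<close> must have \<open>r\<close> a unit, since \<open>Mg \<subseteq> L\<close>.\<close>
lemma left_ideal_between_plus_left_principal:
  assumes L: "left_ideal L" "right_principal (\<pi> ^ Suc k) \<subseteq> L" and g: "g \<in> right_principal (\<pi> ^ k)"
    and K: "left_ideal K" "L \<subseteq> K" "K \<subseteq> L + left_principal g"
  shows "K = L \<or> K = L + left_principal g"
proof (cases "K = L")
  case False
  then obtain x where x: "x \<in> K" "x \<notin> L"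
    using K by blast
  then obtain l y where ly: "x = l + y" "l \<in> L" "y \<in> left_principal g"
    using K(3) by (auto elim!: set_plus_elim)
  then obtain r where r: "y = r * g"
    unfolding left_principal_iff by blast
  have "r \<notin> M"
  proof
    assume "r \<in> M"
    then have "y \<in> L"
      using M_mult_pi_power g r L(2) by blast
    then show False
      using ly x L(1) left_ideal_add by blast
  qed
  then obtain v where v: "v * r = 1"
    using invertible by blast
  have "y = x - l"
    using ly by simp
  then have "y \<in> K"
    using x ly K(1,2) left_ideal_diff by blast
  then have "v * y \<in> K"
    using K(1) left_ideal_mult by blast
  moreover have "v * y = g"
    using r v by (simp add: mult.assoc[symmetric])
  ultimately have "left_principal g \<subseteq> K"
    using left_principal_subset[OF K(1)] by simp
  then have "L + left_principal g \<subseteq> K"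
    using left_ideal_plus_subset[OF K(1) K(2)] by blast
  then show ?thesis
    using K by blast
qed simp

lemma dcc_right_ideals_pi_power:
  assumes "\<pi> ^ n = 0" "k \<le> n"
  shows "dcc_on right_ideal (right_principal (\<pi> ^ k))"
  using assms(2)
proof (induction k rule: inc_induct)
  case base
  have "dcc_on right_ideal {0::'a}"
    by (rule dcc_on_zero) (rule right_ideal_zero)
  then show ?case
    by (simp add: assms(1) right_principal_zero)
next
  case (step k)
  show ?case
    by (rule dcc_on_extend[OF right_ideal_Int right_ideal_plus additive_subgroup_right_ideal step.IH
          right_ideal_right_principal right_ideal_right_principal right_principal_pi_power_Suc_subset])
      (assumption | rule right_ideal_between_pi_powers)+
qed

lemma dcc_left_ideals_plus_left_principal:
  assumes X: "left_ideal X" "right_principal (\<pi> ^ Suc k) \<subseteq> X" "dcc_on left_ideal X"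
    and g: "g \<in> right_principal (\<pi> ^ k)"
  shows "dcc_on left_ideal (X + left_principal g)"
proof (rule dcc_on_extend[OF left_ideal_Int left_ideal_plus additive_subgroup_left_ideal X(3) X(1)])
  show "left_ideal (X + left_principal g)"
    using left_ideal_plus[OF X(1) left_ideal_left_principal] .
  show "X \<subseteq> X + left_principal g"
    using subset_set_plus_left left_ideal_zero[OF left_ideal_left_principal] by blast
qed (assumption | rule left_ideal_between_plus_left_principal[OF X(1,2) g])+

text \<open>The left ideals between \<open>\<pi>\<^sup>k\<^sup>+\<^sup>1R\<close> and \<open>\<pi>\<^sup>kR\<close> are reached from below by adjoining one
  generator at a time, each step preserving the descending chain condition; the ascending
  chain condition makes this terminate.\<close>
lemma dcc_left_ideals_pi_power:
  assumes "\<pi> ^ n = 0" "k \<le> n"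
  shows "dcc_on left_ideal (right_principal (\<pi> ^ k))"
  using assms(2)
proof (induction k rule: inc_induct)
  case base
  have "dcc_on left_ideal {0::'a}"
    by (rule dcc_on_zero) (rule left_ideal_zero)
  then show ?case
    by (simp add: assms(1) right_principal_zero)
next
  case (step k)
  let ?between = "\<lambda>X. right_principal (\<pi> ^ Suc k) \<subseteq> X \<and> X \<subseteq> right_principal (\<pi> ^ k) \<and> dcc_on left_ideal X"
  have "\<exists>X. left_ideal X \<and> ?between X \<and> X = right_principal (\<pi> ^ k)"
  proof (rule ascending_chain_reaches[OF left_ascending_chain])
    show "left_ideal (right_principal (\<pi> ^ Suc k))" "?between (right_principal (\<pi> ^ Suc k))"
      using left_ideal_pi_power step.IH right_principal_pi_power_Suc_subset by blast+
  next
    fix X assume X: "left_ideal X" "?between X" "X \<noteq> right_principal (\<pi> ^ k)"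
    then obtain g where g: "g \<in> right_principal (\<pi> ^ k)" "g \<notin> X"
      by blast
    let ?Y = "X + left_principal g"
    have "left_ideal ?Y"
      using left_ideal_plus[OF X(1) left_ideal_left_principal] .
    moreover have "X \<subset> ?Y"
      using subset_set_plus_left[OF left_ideal_zero[OF left_ideal_left_principal]] g(2)
        set_plus_intro[OF left_ideal_zero[OF X(1)] left_principal_self[of g]] by force
    moreover have "?Y \<subseteq> right_principal (\<pi> ^ k)"
      using left_ideal_plus_subset[OF left_ideal_pi_power] X(2)
        left_principal_subset[OF left_ideal_pi_power g(1)] by blast
    moreover have "dcc_on left_ideal ?Y"
      using dcc_left_ideals_plus_left_principal X g(1) by blast
    ultimately show "\<exists>Y. left_ideal Y \<and> ?between Y \<and> X \<subset> Y"
      using X(2) by blast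
  qed
  then show ?case
    by blast
qed

lemma artinian_principal_right_if_pi_nilpotent:
  assumes "\<pi> ^ n = 0"
  shows "artinian TYPE('a) \<and> principal_right_ideal_ring TYPE('a)"
proof -
  have "dcc_on left_ideal (UNIV::'a set)" "dcc_on right_ideal (UNIV::'a set)"
    using dcc_left_ideals_pi_power[OF assms, of 0] dcc_right_ideals_pi_power[OF assms, of 0]
    by (simp_all add: right_principal_one)
  then have "left_artinian TYPE('a)" "right_artinian TYPE('a)"
    unfolding left_artinian_def right_artinian_def dcc_on_def by blast+
  moreover have "principal_right_ideal_ring TYPE('a)"
    unfolding principal_right_ideal_ring_def using right_ideal_principal
    unfolding right_principal_def by blast
  ultimately show ?thesis
    unfolding artinian_def by blast
qed

subsection \<open>Non-nilpotent \<open>\<pi>\<close>: the prime case\<close>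

context
  assumes pi_not_nilpotent: "\<And>n. \<pi> ^ n \<noteq> 0"
begin

lemma pi_intersection_step:
  assumes b: "\<forall>k. b \<in> right_principal (\<pi> ^ k)"
  shows "\<exists>b'. (\<forall>k. b' \<in> right_principal (\<pi> ^ k)) \<and> b = \<pi> * b'"
proof -
  obtain b' where bb: "b = \<pi> * b'"
    using b[rule_format, of 1] unfolding right_principal_iff by auto
  have "b' \<in> right_principal (\<pi> ^ m)" for m
  proof (rule ccontr)
    assume "b' \<notin> right_principal (\<pi> ^ m)"
    then obtain r where r: "\<pi> ^ m = b' * r"
      using right_chain[of b' "\<pi> ^ m"] unfolding right_principal_iff by blast
    obtain s where s: "b = \<pi> ^ Suc (Suc m) * s"
      using b unfolding right_principal_iff by blast
    have "\<pi> ^ Suc m = \<pi> * (b' * r)"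
      using r by simp
    also have "\<dots> = b * r"
      using bb by (simp add: mult.assoc)
    also have "\<dots> = \<pi> ^ Suc (Suc m) * s * r"
      using s by simp
    also have "\<dots> = \<pi> ^ Suc m * (\<pi> * s * r)"
      by (simp only: power_Suc2 mult.assoc)
    finally have "\<pi> ^ Suc m = 0"
      using zero_if_eq_mult_M M_mult_right[OF M_mult_right[OF pi_in_M]] by blast
    then show False
      using pi_not_nilpotent by blast
  qed
  then show ?thesis
    using bb by blast
qed

text \<open>Krull intersection theorem: a nonzero \<open>b \<in> \<Inter>\<^sub>k \<pi>\<^sup>kR\<close> would give the strictly ascending
  chain \<open>Rb \<subset> Rb' \<subset> \<dots>\<close> with \<open>b = \<pi>b'\<close>.\<close>
lemma pi_power_intersection_zero:
  assumes "\<forall>k. x \<in> right_principal (\<pi> ^ k)"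
  shows "x = 0"
proof (rule ccontr)
  assume "x \<noteq> 0"
  let ?deep = "\<lambda>X. \<exists>b. (\<forall>k. b \<in> right_principal (\<pi> ^ k)) \<and> b \<noteq> 0 \<and> X = left_principal b"
  have "\<exists>X. left_ideal X \<and> ?deep X \<and> False"
  proof (rule ascending_chain_reaches[OF left_ascending_chain])
    show "left_ideal (left_principal x)" "?deep (left_principal x)"
      using left_ideal_left_principal assms \<open>x \<noteq> 0\<close> by blast+
  next
    fix X assume "left_ideal X" "?deep X"
    then obtain b where b: "\<forall>k. b \<in> right_principal (\<pi> ^ k)" "b \<noteq> 0" "X = left_principal b"
      by blast
    obtain b' where b': "\<forall>k. b' \<in> right_principal (\<pi> ^ k)" "b = \<pi> * b'"
      using pi_intersection_step[OF b(1)] by blast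
    have "b' \<noteq> 0"
      using b'(2) b(2) by auto
    have "b \<in> left_principal b'"
      unfolding b'(2) left_principal_iff by blast
    then have "X \<subseteq> left_principal b'"
      unfolding b(3) by (rule left_principal_subset[OF left_ideal_left_principal])
    moreover have "b' \<notin> X"
    proof
      assume "b' \<in> X"
      then obtain r where "b' = r * (\<pi> * b')"
        unfolding b(3) b'(2) left_principal_iff by blast
      then have "b' = (r * \<pi>) * b'"
        by (simp add: mult.assoc)
      then show False
        using zero_if_eq_M_mult M_mult_left[OF pi_in_M] \<open>b' \<noteq> 0\<close> by blast
    qed
    ultimately have "X \<subset> left_principal b'"
      using left_principal_self by blast
    then show "\<exists>Y. left_ideal Y \<and> ?deep Y \<and> X \<subset> Y"
      using left_ideal_left_principal b'(1) \<open>b' \<noteq> 0\<close> by blast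
  qed
  then show False
    by blast
qed

lemma pi_power_unit_decomp_nonzero:
  assumes "x \<noteq> 0"
  shows "\<exists>k u. u \<notin> M \<and> x = \<pi> ^ k * u"
  using pi_power_intersection_zero assms pi_power_unit_decomp_if_notin by blast

lemma unit_mult_pi:
  assumes u: "u \<notin> M"
  shows "\<exists>u'. u' \<notin> M \<and> u * \<pi> = \<pi> * u'"
proof -
  obtain w where w: "u * \<pi> = \<pi> * w"
    using M_mult_left[OF pi_in_M, of u] unfolding M_iff by blast
  have "w \<notin> M"
  proof
    assume "w \<in> M"
    then obtain w1 where w1: "w = \<pi> * w1"
      unfolding M_iff by blast
    obtain v where v: "v * u = 1"
      using invertible u by blast
    obtain w2 where w2: "v * \<pi> = \<pi> * w2"
      using M_mult_left[OF pi_in_M, of v] unfolding M_iff by blast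
    have "\<pi> = (v * u) * \<pi>"
      using v by simp
    also have "\<dots> = (v * \<pi>) * \<pi> * w1"
      using w w1 by (simp add: mult.assoc)
    also have "\<dots> = \<pi> * (w2 * \<pi> * w1)"
      using w2 by (simp add: mult.assoc)
    finally have "\<pi> = 0"
      using zero_if_eq_mult_M M_mult_right[OF M_mult_left[OF pi_in_M]] by blast
    then show False
      using pi_not_nilpotent[of 1] by simp
  qed
  then show ?thesis
    using w by blast
qed

lemma unit_mult_pi_power:
  assumes "u \<notin> M"
  shows "\<exists>u'. u' \<notin> M \<and> u * \<pi> ^ k = \<pi> ^ k * u'"
  using assms
proof (induction k arbitrary: u)
  case 0
  then show ?case
    by (intro exI[of _ u]) simp
next
  case (Suc k)
  obtain u1 where u1: "u1 \<notin> M" "u * \<pi> ^ k = \<pi> ^ k * u1"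
    using Suc by blast
  obtain u2 where u2: "u2 \<notin> M" "u1 * \<pi> = \<pi> * u2"
    using unit_mult_pi u1(1) by blast
  have "u * \<pi> ^ Suc k = (u * \<pi> ^ k) * \<pi>"
    by (simp only: power_Suc2 mult.assoc)
  also have "\<dots> = \<pi> ^ k * (u1 * \<pi>)"
    using u1 by (simp add: mult.assoc)
  also have "\<dots> = \<pi> ^ Suc k * u2"
    using u2 by (simp only: power_Suc2 mult.assoc)
  finally show ?case
    using u2(1) by blast
qed

lemma pi_power_mult_unit_nonzero:
  assumes "u \<notin> M"
  shows "\<pi> ^ k * u \<noteq> 0"
  using unit_cancel_right[OF assms, of "\<pi> ^ k"] pi_not_nilpotent by blast

lemma no_zero_divisors:
  fixes a b :: 'a
  assumes "a \<noteq> 0" "b \<noteq> 0"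
  shows "a * b \<noteq> 0"
proof -
  obtain k u where a: "u \<notin> M" "a = \<pi> ^ k * u"
    using pi_power_unit_decomp_nonzero assms(1) by blast
  obtain j v where b: "v \<notin> M" "b = \<pi> ^ j * v"
    using pi_power_unit_decomp_nonzero assms(2) by blast
  obtain u' where u': "u' \<notin> M" "u * \<pi> ^ j = \<pi> ^ j * u'"
    using unit_mult_pi_power a(1) by blast
  have "a * b = \<pi> ^ k * (u * \<pi> ^ j) * v"
    using a b by (simp add: mult.assoc)
  also have "\<dots> = \<pi> ^ (k + j) * (u' * v)"
    using u' by (simp add: mult.assoc power_add)
  finally show ?thesis
    using pi_power_mult_unit_nonzero mult_notin_M u'(1) b(1) by simp
qed

lemma pi_power_cancel:
  assumes "\<pi> ^ k * x = \<pi> ^ k * y"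
  shows "x = y"
proof -
  have "\<pi> ^ k * (x - y) = 0"
    using assms by (simp add: right_diff_distrib)
  then have "x - y = 0"
    using no_zero_divisors pi_not_nilpotent by blast
  then show ?thesis
    by simp
qed

lemma pi_power_unit_decomp_unique:
  assumes "\<alpha> \<notin> M" "\<beta> \<notin> M" "\<pi> ^ i * \<alpha> = \<pi> ^ j * \<beta>"
  shows "i = j \<and> \<alpha> = \<beta>"
proof -
  have not_less: "\<not> i < j" if "\<pi> ^ i * \<alpha> = \<pi> ^ j * \<beta>" "\<alpha> \<notin> M" for i j \<alpha> \<beta>
  proof
    assume "i < j"
    then obtain m where "j = Suc (i + m)"
      using less_imp_Suc_add by blast
    then have "j = i + Suc m"
      by simp
    then have "\<pi> ^ j = \<pi> ^ i * (\<pi> * \<pi> ^ m)"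
      by (simp only: power_add power_Suc)
    then have "\<pi> ^ i * \<alpha> = \<pi> ^ i * (\<pi> * (\<pi> ^ m * \<beta>))"
      using that(1) by (simp add: mult.assoc)
    then have "\<alpha> = \<pi> * (\<pi> ^ m * \<beta>)"
      by (rule pi_power_cancel)
    then have "\<alpha> \<in> M"
      unfolding M_iff by blast
    then show False
      using that(2) by blast
  qed
  have "i = j"
    using not_less[OF assms(3) assms(1)] not_less[OF assms(3)[symmetric] assms(2)] by simp
  moreover from this have "\<alpha> = \<beta>"
    using assms(3) pi_power_cancel by simp
  ultimately show ?thesis
    by blast
qed

lemma pi_mult_right_inverse:
  assumes "\<beta> \<notin> M" "\<beta> * \<pi> = \<pi> * \<beta>'" "\<beta>' * y = 1"
  shows "\<exists>z. \<pi> * y = z * \<pi>"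
proof -
  obtain z where "z * \<beta> = 1"
    using invertible assms(1) by blast
  then have "\<pi> * y = z * (\<beta> * \<pi>) * y"
    by (simp add: mult.assoc[symmetric])
  also have "\<dots> = z * \<pi>"
    using assms(2,3) by (simp add: mult.assoc)
  finally show ?thesis
    by blast
qed

text \<open>The left Ore condition for \<open>\<pi>\<close> and \<open>\<pi> u\<close> gives \<open>a \<pi> = b \<pi> u \<noteq> 0\<close>; comparing the
  decompositions \<open>\<pi>\<^sup>k u\<close> of both sides shows \<open>\<pi> u \<in> R \<pi>\<close>.\<close>
lemma pi_mult_unit:
  assumes u: "u \<notin> M"
  shows "\<exists>s. \<pi> * u = s * \<pi>"
proof -
  have "\<pi> \<noteq> 0"
    using pi_not_nilpotent[of 1] by simp
  have "x = 0" if "x * \<pi> = 0" for x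
    using that no_zero_divisors \<open>\<pi> \<noteq> 0\<close> by blast
  moreover have "\<pi> * u \<noteq> 0"
    using pi_power_mult_unit_nonzero[OF u, of 1] by simp
  ultimately obtain a b where ab: "a * \<pi> = b * (\<pi> * u)" "a * \<pi> \<noteq> 0"
    using left_ore_condition[OF left_noetherian] by blast
  then have "a \<noteq> 0" "b \<noteq> 0"
    by auto
  then obtain i \<alpha> j \<beta> where \<alpha>: "\<alpha> \<notin> M" "a = \<pi> ^ i * \<alpha>" and \<beta>: "\<beta> \<notin> M" "b = \<pi> ^ j * \<beta>"
    using pi_power_unit_decomp_nonzero by meson
  obtain \<alpha>' \<beta>' where \<alpha>': "\<alpha>' \<notin> M" "\<alpha> * \<pi> = \<pi> * \<alpha>'" and \<beta>': "\<beta>' \<notin> M" "\<beta> * \<pi> = \<pi> * \<beta>'"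
    using unit_mult_pi \<alpha>(1) \<beta>(1) by meson
  have "\<pi> ^ Suc i * \<alpha>' = \<pi> ^ i * (\<alpha> * \<pi>)"
    using \<alpha>'(2) by (simp only: power_Suc2 mult.assoc)
  also have "\<dots> = b * (\<pi> * u)"
    using \<alpha>(2) ab(1) by (simp add: mult.assoc)
  also have "\<dots> = \<pi> ^ j * (\<beta> * \<pi>) * u"
    using \<beta>(2) by (simp add: mult.assoc)
  also have "\<dots> = \<pi> ^ Suc j * (\<beta>' * u)"
    using \<beta>'(2) by (simp only: power_Suc2 mult.assoc)
  finally have "\<alpha>' = \<beta>' * u"
    using pi_power_unit_decomp_unique \<alpha>'(1) mult_notin_M[OF \<beta>'(1) u] by blast
  obtain y where y: "y * \<beta>' = 1" "\<beta>' * y = 1"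
    using invertible \<beta>'(1) by blast
  obtain z where z\<pi>: "\<pi> * y = z * \<pi>"
    using pi_mult_right_inverse \<beta>(1) \<beta>'(2) y(2) by blast
  have "u = y * \<alpha>'"
    using \<open>\<alpha>' = \<beta>' * u\<close> y(1) by (simp add: mult.assoc[symmetric])
  then have "\<pi> * u = \<pi> * y * \<alpha>'"
    by (simp add: mult.assoc)
  also have "\<dots> = z * (\<pi> * \<alpha>')"
    using z\<pi> by (simp add: mult.assoc)
  also have "\<dots> = z * \<alpha> * \<pi>"
    using \<alpha>'(2) by (simp add: mult.assoc)
  finally show ?thesis
    by blast
qed

lemma pi_mult: "\<exists>s. \<pi> * w = s * \<pi>"
proof (cases "w = 0")
  case True
  then show ?thesis
    by (intro exI[of _ 0]) simp
next
  case False
  then obtain k u where u: "u \<notin> M" "w = \<pi> ^ k * u"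
    using pi_power_unit_decomp_nonzero by blast
  obtain s where s: "\<pi> * u = s * \<pi>"
    using pi_mult_unit u(1) by blast
  have "\<pi> * w = \<pi> ^ k * (\<pi> * u)"
    using u(2) by (simp add: mult.assoc[symmetric] power_commutes)
  also have "\<dots> = (\<pi> ^ k * s) * \<pi>"
    using s by (simp add: mult.assoc)
  finally show ?thesis
    by blast
qed

lemma pi_power_mult: "\<exists>s. \<pi> ^ k * w = s * \<pi> ^ k"
proof (induction k arbitrary: w)
  case 0
  then show ?case
    by (intro exI[of _ w]) simp
next
  case (Suc k)
  obtain s where s: "\<pi> ^ k * w = s * \<pi> ^ k"
    using Suc by blast
  obtain s' where s': "\<pi> * s = s' * \<pi>"
    using pi_mult by blast
  have "\<pi> ^ Suc k * w = \<pi> * (\<pi> ^ k * w)"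
    by (simp add: mult.assoc)
  also have "\<dots> = (\<pi> * s) * \<pi> ^ k"
    using s by (simp add: mult.assoc)
  also have "\<dots> = s' * \<pi> ^ Suc k"
    using s' by (simp add: mult.assoc)
  finally show ?case
    by blast
qed

lemma left_principal_pi_power: "left_principal (\<pi> ^ k) = right_principal (\<pi> ^ k)"
  unfolding left_principal_iff right_principal_iff set_eq_iff
  using mult_pi_power_commute pi_power_mult by metis

lemma right_ideal_zero_or_pi_power:
  assumes "right_ideal I"
  shows "I = {0} \<or> (\<exists>k. I = right_principal (\<pi> ^ k))"
proof -
  obtain a where a: "I = right_principal a"
    using right_ideal_principal assms by blast
  show ?thesis
  proof (cases "a = 0")
    case True
    then show ?thesis
      using a right_principal_zero by blast
  next
    case False
    then obtain k u where "u \<notin> M" "a = \<pi> ^ k * u"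
      using pi_power_unit_decomp_nonzero by blast
    then show ?thesis
      using a right_principal_mult_unit by blast
  qed
qed

lemma prime_ring_principal_ideals_if_pi_not_nilpotent:
  "prime_ring TYPE('a) \<and> (\<forall>I::'a set. two_sided_ideal I \<longrightarrow>
     (\<exists>a. I = {r * a | r. True}) \<and> (\<exists>b. I = {b * r | r. True}))"
proof
  show "prime_ring TYPE('a)"
    unfolding prime_ring_def using no_zero_divisors[of _ "_ :: 'a"] by (metis mult_1_right zero_neq_one)
  show "\<forall>I::'a set. two_sided_ideal I \<longrightarrow>
      (\<exists>a. I = {r * a | r. True}) \<and> (\<exists>b. I = {b * r | r. True})"
  proof (intro allI impI)
    fix I :: "'a set"
    assume "two_sided_ideal I"
    then have "right_ideal I"
      unfolding two_sided_ideal_def by blast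
    then have "I = {0} \<or> (\<exists>k. I = right_principal (\<pi> ^ k))"
      by (rule right_ideal_zero_or_pi_power)
    then have "\<exists>c. I = left_principal c \<and> I = right_principal c"
      using left_principal_pi_power right_principal_zero left_principal_zero by metis
    then show "(\<exists>a. I = {r * a | r. True}) \<and> (\<exists>b. I = {b * r | r. True})"
      unfolding left_principal_def right_principal_def by blast
  qed
qed

end

end

theorem theorem2p8:
  assumes "local_ring TYPE('a::ring_1)"
    and "noetherian TYPE('a)"
    and "\<forall>N::('a \<times> 'a) set. left_submodule2 N \<longrightarrow> quot2_dsum_cyclic N"
  shows "(artinian TYPE('a) \<and> principal_left_ideal_ring TYPE('a))
       \<or> (artinian TYPE('a) \<and> principal_right_ideal_ring TYPE('a))
       \<or> (prime_ring TYPE('a) \<and> (\<forall>I::'a set. two_sided_ideal I \<longrightarrow>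
             (\<exists>a. I = {r * a | r. True}) \<and> (\<exists>b. I = {b * r | r. True})))"
proof -
  obtain M :: "'a set" where "maximal_left_ideal M" "\<And>N. maximal_left_ideal N \<Longrightarrow> N = M"
    using assms(1) unfolding local_ring_def by blast
  then interpret left_noetherian_local_ring M
    using assms(2) unfolding noetherian_def by unfold_locales blast+
  interpret noetherian_right_chain_ring M
  proof
    show "right_noetherian TYPE('a)"
      using assms(2) unfolding noetherian_def by blast
    show "x \<in> right_principal y \<or> y \<in> right_principal x" for x y :: 'a
      using right_chain_if_two_generated_decompose[OF assms(3)] .
  qed
  show ?thesis
  proof (cases "\<exists>n. \<pi> ^ n = 0")
    case True
    then show ?thesis
      using artinian_principal_right_if_pi_nilpotent by blast
  next
    case False
    then show ?thesis
      using prime_ring_principal_ideals_if_pi_not_nilpotent by blast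
  qed
qed

end
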